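(* Let $m\ge 4$, $t$, $g$ be positive integers with $t\ge g+1$, and put $\alpha=(t-1)-g$. Consider a bin configuration of the game $G(m,t,g)$ in which every current bin load is at most $t-1$. Suppose there are two distinct bins $A,B$ such that both of the following hold: 1. the sum of the loads of all bins other than $A$ and $B$ is at least $(m-2)g-2\alpha-1$; 2. there is a bin $C\notin\{A,B\}$ whose load is strictly less than $\alpha$. Then Algorithm wins from this configuration.
   Context: Bin stretching game $G(m,t,g)$: there are $m$ bins. In each round Adversary presents an item of positive integer size, and Algorithm then irrevocably places it into one of the $m$ bins. The load of a bin is the total size of the items in it. A bin configuration consists of: - the current loads $L_1,\dots,L_m$ of the bins, and - the multiset $\mathcal I$ of items presented so far, placed so that the bins have exactly these loads. "Algorithm wins from this configuration" means the following. There is an online rule which, given the configuration and the items presented so far, assigns each newly presented item to a bin. This rule must guarantee: for every finite sequence $e_1,\dots,e_j$ of further positive-integer items such that the multiset $\mathcal I\cup\{e_1,\dots,e_j\}$ can be partitioned into $m$ parts each of total size at most $g$, every bin load is at most $t-1$ after these items are placed. *)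

theory Defs
  imports Main "HOL-Library.Multiset"
begin

definition packable :: "nat \<Rightarrow> nat \<Rightarrow> nat multiset \<Rightarrow> bool" where
  "packable m g M \<longleftrightarrow>
     (\<exists>P :: nat \<Rightarrow> nat multiset. (\<Sum>i<m. P i) = M \<and> (\<forall>i<m. sum_mset (P i) \<le> g))"

definition bin_config :: "nat \<Rightarrow> (nat \<Rightarrow> nat) \<Rightarrow> nat multiset \<Rightarrow> bool" where
  "bin_config m L I \<longleftrightarrow> (\<forall>x\<in>#I. 0 < x) \<and>
     (\<exists>P :: nat \<Rightarrow> nat multiset. (\<Sum>i<m. P i) = I \<and> (\<forall>i<m. sum_mset (P i) = L i))"

text \<open>An online rule maps the list of further items presented so far (the last one being
  the item to place now) to a bin. Load of bin i after the further items es are placed.\<close>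
definition load_after :: "(nat \<Rightarrow> nat) \<Rightarrow> (nat list \<Rightarrow> nat) \<Rightarrow> nat list \<Rightarrow> nat \<Rightarrow> nat" where
  "load_after L rule es i =
     L i + (\<Sum>k<length es. if rule (take (Suc k) es) = i then es ! k else 0)"

definition algorithm_wins :: "nat \<Rightarrow> nat \<Rightarrow> nat \<Rightarrow> (nat \<Rightarrow> nat) \<Rightarrow> nat multiset \<Rightarrow> bool" where
  "algorithm_wins m t g L I \<longleftrightarrow>
     (\<exists>rule :: nat list \<Rightarrow> nat. (\<forall>es. rule es < m) \<and>
        (\<forall>es. (\<forall>e\<in>set es. 0 < e) \<and> packable m g (I + mset es) \<longrightarrow>
              (\<forall>i<m. load_after L rule es i \<le> t - 1)))"

end

theory Submission
  imports Defs
begin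

text \<open>Algorithm plays First Fit on the three bins A, B, C with capacity t - 1 and never touches
  the other bins. Since all items together must fit into m bins of size g, the other bins can
  receive at most 2g + 2\<alpha> + 1 = 2(t - 1) + 1 further load, so the items arriving into A and B
  have total size at most 2(t - 1) + 1 minus their current loads. The first item rejected by both
  A and B goes to C, where it fits because C has room g; after that, whatever remains has total
  size at most the free space of A, so First Fit places everything else into A.\<close>

lemma sum_mset_sum: "sum_mset (\<Sum>i\<in>A. P i) = (\<Sum>i\<in>A. sum_mset (P i))"
  by (induction A rule: infinite_finite_induct) auto

lemma packable_sum_le:
  assumes "packable m g M"
  shows "sum_mset M \<le> m * g"
proof -
  obtain P where P: "(\<Sum>i<m. P i) = M" "\<forall>i<m. sum_mset (P i) \<le> g"
    using assms unfolding packable_def by blast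
  have "sum_mset M = (\<Sum>i<m. sum_mset (P i))"
    using P(1) sum_mset_sum by metis
  also have "\<dots> \<le> (\<Sum>i<m. g)"
    using P(2) by (intro sum_mono) auto
  finally show ?thesis by simp
qed

lemma packable_item_le:
  assumes "packable m g M" and "x \<in># M"
  shows "x \<le> g"
proof -
  obtain P where P: "(\<Sum>i<m. P i) = M" "\<forall>i<m. sum_mset (P i) \<le> g"
    using assms(1) unfolding packable_def by blast
  then obtain i where "i < m" "x \<in># P i"
    using assms(2) by (auto simp: set_mset_sum)
  then have "x \<le> sum_mset (P i)"
    by (simp add: sum_mset.remove)
  with P(2) \<open>i < m\<close> show ?thesis by fastforce
qed

lemma bin_config_sum_mset:
  assumes "bin_config m L I"
  shows "sum_mset I = (\<Sum>i<m. L i)"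
proof -
  obtain P where "(\<Sum>i<m. P i) = I" "\<forall>i<m. sum_mset (P i) = L i"
    using assms unfolding bin_config_def by blast
  then show ?thesis
    using sum_mset_sum[of P "{..<m}"] by simp
qed

definition place_by :: "((nat \<Rightarrow> nat) \<Rightarrow> nat \<Rightarrow> nat) \<Rightarrow> nat \<Rightarrow> (nat \<Rightarrow> nat) \<Rightarrow> nat \<Rightarrow> nat" where
  "place_by pick x l = l(pick l x := l (pick l x) + x)"

definition rule_of :: "((nat \<Rightarrow> nat) \<Rightarrow> nat \<Rightarrow> nat) \<Rightarrow> (nat \<Rightarrow> nat) \<Rightarrow> nat list \<Rightarrow> nat" where
  "rule_of pick L es = pick (fold (place_by pick) (butlast es) L) (last es)"

lemma load_after_snoc:
  "load_after L rule (es @ [x]) i = load_after L rule es i + (if rule (es @ [x]) = i then x else 0)"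
proof -
  have "(\<Sum>k<length es. if rule (take (Suc k) (es @ [x])) = i then (es @ [x]) ! k else 0)
      = (\<Sum>k<length es. if rule (take (Suc k) es) = i then es ! k else 0)"
    by (intro sum.cong) (auto simp: nth_append)
  then show ?thesis
    unfolding load_after_def by simp
qed

lemma load_after_rule_of: "load_after L (rule_of pick L) es = fold (place_by pick) es L"
proof (induction es rule: rev_induct)
  case Nil
  show ?case by (auto simp: load_after_def)
next
  case (snoc x es)
  have "rule_of pick L (es @ [x]) = pick (fold (place_by pick) es L) x"
    by (simp add: rule_of_def)
  then show ?case
    by (simp add: fun_eq_iff load_after_snoc snoc.IH) (simp add: place_by_def)
qed

definition first_fit :: "nat \<Rightarrow> nat \<Rightarrow> nat \<Rightarrow> nat \<Rightarrow> (nat \<Rightarrow> nat) \<Rightarrow> nat \<Rightarrow> nat" where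
  "first_fit cap A B C l x = (if l A + x \<le> cap then A else if l B + x \<le> cap then B else C)"

text \<open>The invariant: while C still has room g, A and B together can absorb all remaining
  items; once C has been used, A alone can.\<close>

lemma first_fit_bounded:
  assumes "\<forall>x\<in>set es. x \<le> g" and "A < m" "B < m" "C < m" and "A \<noteq> B" "A \<noteq> C" "B \<noteq> C"
    and "\<forall>i<m. l i \<le> cap"
    and "l C + g \<le> cap \<and> l A + l B + sum_list es \<le> 2 * cap + 1 \<or> l A + sum_list es \<le> cap"
  shows "\<forall>i<m. fold (place_by (first_fit cap A B C)) es l i \<le> cap"
  using assms(1,8,9)
proof (induction es arbitrary: l)
  case Nil
  then show ?case by simp
next
  case (Cons x es)
  let ?l' = "place_by (first_fit cap A B C) x l"
  have "\<forall>i<m. ?l' i \<le> cap"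
    "?l' C + g \<le> cap \<and> ?l' A + ?l' B + sum_list es \<le> 2 * cap + 1 \<or> ?l' A + sum_list es \<le> cap"
    using Cons.prems assms(2-7) by (auto simp: place_by_def first_fit_def)
  then show ?case
    using Cons by simp
qed

lemma algorithm_wins_if_rule:
  assumes "\<forall>es. rule es < m"
    and "\<And>es. \<forall>e\<in>set es. 0 < e \<Longrightarrow> packable m g (I + mset es) \<Longrightarrow> \<forall>i<m. load_after L rule es i \<le> t - 1"
  shows "algorithm_wins m t g L I"
  using assms unfolding algorithm_wins_def by blast

theorem mainTheorem2:
  fixes m t g :: nat and L :: "nat \<Rightarrow> nat" and I :: "nat multiset" and A B :: nat
  assumes "m \<ge> 4" and "t > 0" and "g > 0" and "t \<ge> g + 1"
    and "bin_config m L I"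
    and "\<forall>i<m. L i \<le> t - 1"
    and "A < m" and "B < m" and "A \<noteq> B"
    and "int (\<Sum>i\<in>{..<m} - {A, B}. L i)
           \<ge> int (m - 2) * int g - 2 * (int (t - 1) - int g) - 1"
    and "\<exists>C<m. C \<noteq> A \<and> C \<noteq> B \<and> int (L C) < int (t - 1) - int g"
  shows "algorithm_wins m t g L I"
proof -
  obtain C where C: "C < m" "C \<noteq> A" "C \<noteq> B" "L C + g \<le> t - 1"
    using assms(11) by auto
  let ?rule = "rule_of (first_fit (t - 1) A B C) L"
  show ?thesis
  proof (rule algorithm_wins_if_rule[of ?rule])
    show "\<forall>es. ?rule es < m"
      using assms(7,8) C(1) by (simp add: rule_of_def first_fit_def)
    fix es :: "nat list"
    assume packable: "packable m g (I + mset es)"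
    then have items: "\<forall>x\<in>set es. x \<le> g"
      using packable_item_le by auto
    have total: "sum_mset I + sum_list es \<le> m * g"
      using packable_sum_le[OF packable] by (simp add: sum_mset_sum_list)
    have rest: "int (m * g) \<le> int (\<Sum>i\<in>{..<m} - {A, B}. L i) + int (2 * (t - 1) + 1)"
      using assms(1,4,10) by (simp add: of_nat_diff algebra_simps)
    have "sum_mset I = L A + L B + (\<Sum>i\<in>{..<m} - {A, B}. L i)"
      using bin_config_sum_mset[OF assms(5)] sum.subset_diff[of "{A, B}" "{..<m}" L] assms(7-9)
      by simp
    with total rest have "L A + L B + sum_list es \<le> 2 * (t - 1) + 1"
      by linarith
    then show "\<forall>i<m. load_after L ?rule es i \<le> t - 1"
      unfolding load_after_rule_of
      using first_fit_bounded[where l = L and cap = "t - 1"] items assms(6-9) C by auto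
  qed
qed

end
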